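(* Let $T>0$, let $F:\mathbb{R}^n\rightrightarrows\mathbb{R}^n$ be a set-valued mapping with closed graph, and let $f:[0,T]\times\mathbb{R}^n\to\mathbb{R}^n$ be continuously differentiable. Let $x:[0,T]\to\mathbb{R}^n$ be continuous with $0\in f(t,x(t))+F(x(t))$ for each $t\in[0,T]$, and set $W:=\{(x(t),-f(t,x(t))):t\in[0,T]\}$. Suppose $F$ is uniformly semismooth$^*$ on $W$. Then for each $\varepsilon>0$ there is $\delta>0$ such that for each $t\in[0,T]$, each $(x,y)\in(B[x(t),\delta]\times B[0,\delta])\cap\operatorname{gph}(f(t,\cdot)+F)$ and each $(y^*,x^* )\in\operatorname{gph}D^*(f(t,\cdot)+F)(x,y)$ we have $$|\langle x^*,x-x(t)\rangle-\langle y^*,y\rangle|\le\varepsilon\|(x^*,y^* )\|\,\|(x,y)-(x(t),0)\|.$$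
   Context: Euclidean norm on $\mathbb{R}^n$, max-norm $\|(a,b)\|=\max\{\|a\|,\|b\|\}$ on products; $B[z,r]$ is the closed ball. The limiting coderivative of a set-valued map $G$ at $(x,y)\in\operatorname{gph}G$ is given by $\operatorname{gph}D^*G(x,y)=\{(y^*,x^* ):(x^*,-y^* )\in N_{\operatorname{gph}G}(x,y)\}$, $N$ the limiting normal cone. $F$ is uniformly semismooth$^*$ on a set $W$ if for each $\varepsilon>0$ there is $\delta>0$ such that for each $(u,z)\in W$, each $(x,y)\in(B[u,\delta]\times B[z,\delta])\cap\operatorname{gph}F$ and each $(y^*,x^* )\in\operatorname{gph}D^*F(x,y)$: $|\langle x^*,x-u\rangle-\langle y^*,y-z\rangle|\le\varepsilon\|(x^*,y^* )\|\,\|(x,y)-(u,z)\|$. *)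

theory Defs
  imports "HOL-Analysis.Analysis"
begin

definition gph :: "('a \<Rightarrow> 'b set) \<Rightarrow> ('a \<times> 'b) set" where
  "gph G = {(x, y). y \<in> G x}"

definition pnorm :: "('a::real_normed_vector \<times> 'b::real_normed_vector) \<Rightarrow> real" where
  "pnorm p = max (norm (fst p)) (norm (snd p))"

definition regular_normal_cone :: "'a::real_inner set \<Rightarrow> 'a \<Rightarrow> 'a set" where
  "regular_normal_cone S z =
     (if z \<in> S then {v. \<forall>e>0. \<exists>d>0. \<forall>z'\<in>S. norm (z' - z) < d \<longrightarrow> inner v (z' - z) \<le> e * norm (z' - z)}
      else {})"

definition limiting_normal_cone :: "'a::real_inner set \<Rightarrow> 'a \<Rightarrow> 'a set" where
  "limiting_normal_cone S z =
     (if z \<in> S then {v. \<exists>zs vs. (\<forall>k. zs k \<in> S \<and> vs k \<in> regular_normal_cone S (zs k))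
                              \<and> zs \<longlonglongrightarrow> z \<and> vs \<longlonglongrightarrow> v}
      else {})"

definition coderiv_gph :: "('a::real_inner \<Rightarrow> 'b::real_inner set) \<Rightarrow> 'a \<Rightarrow> 'b \<Rightarrow> ('b \<times> 'a) set" where
  "coderiv_gph G x y = {(ys, xs). (xs, - ys) \<in> limiting_normal_cone (gph G) (x, y)}"

definition uniformly_semismooth_star :: "('a::euclidean_space \<Rightarrow> 'a set) \<Rightarrow> ('a \<times> 'a) set \<Rightarrow> bool" where
  "uniformly_semismooth_star F W \<longleftrightarrow>
     (\<forall>e>0. \<exists>d>0. \<forall>(u, z)\<in>W. \<forall>(x, y)\<in>(cball u d \<times> cball z d) \<inter> gph F.
        \<forall>(ys, xs)\<in>coderiv_gph F x y.
          \<bar>inner xs (x - u) - inner ys (y - z)\<bar> \<le> e * pnorm (xs, ys) * pnorm ((x, y) - (u, z)))"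

end

theory Submission
  imports Defs
begin

text \<open>For fixed t write G = f(t,.) + F. The graph of G is the image of gph F under
  (x, v) |-> (x, f(t,x) + v), whose derivative has adjoint (a, b) |-> (a + D^T b, b) with
  D the partial derivative of f in x. Pulling regular normals back along this map and
  passing to limits gives the coderivative shift rule: (y*, x*) in gph D^*G(x,y) implies
  (y*, x* - D^T y*) in gph D^*F(x, y - f(t,x)). Inserting this into the semismooth*
  inequality for F at (x(t), -f(t,x(t))) reproduces the claimed inequality up to the
  term <y*, f(t,x) - f(t,x(t)) - D (x - x(t))>, which is small relative to |x - x(t)|
  uniformly in t, because the derivative of f is uniformly continuous on a compact tube
  around the curve t |-> (t, x(t)).\<close>

lemma adjoint_eq_sum_Basis:
  fixes f :: "'a::euclidean_space \<Rightarrow> 'b::euclidean_space"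
  assumes "linear f"
  shows "adjoint f y = (\<Sum>i\<in>Basis. (f i \<bullet> y) *\<^sub>R i)"
  by (metis (no_types, lifting) adjoint_works[OF assms] euclidean_representation inner_commute sum.cong)

lemma norm_adjoint_le:
  fixes f :: "'a::euclidean_space \<Rightarrow> 'b::euclidean_space"
  assumes "linear f" and bound: "\<And>h. norm (f h) \<le> L * norm h"
  shows "norm (adjoint f y) \<le> L * norm y"
proof -
  let ?w = "adjoint f y"
  have "norm ?w * norm ?w = f ?w \<bullet> y"
    by (metis adjoint_works[OF assms(1)] power2_norm_eq_inner power2_eq_square)
  also have "\<dots> \<le> norm (f ?w) * norm y" by (simp add: norm_cauchy_schwarz)
  also have "\<dots> \<le> (L * norm y) * norm ?w"
    using mult_right_mono[OF bound norm_ge_zero] by (simp add: mult_ac)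
  finally have "norm ?w * norm ?w \<le> (L * norm y) * norm ?w" .
  moreover have "L \<ge> 0"
  proof -
    obtain i :: 'a where "i \<in> Basis" using nonempty_Basis by blast
    then show ?thesis using bound[of i] order_trans[OF norm_ge_zero] by fastforce
  qed
  ultimately show ?thesis by (cases "?w = 0") auto
qed

lemma regular_normal_cone_imp_mem:
  "v \<in> regular_normal_cone S z \<Longrightarrow> z \<in> S"
  by (simp add: regular_normal_cone_def split: if_splits)

lemma regular_normal_coneE:
  assumes "v \<in> regular_normal_cone S z" and "e > 0"
  obtains d where "d > 0"
    and "\<And>z'. z' \<in> S \<Longrightarrow> norm (z' - z) < d \<Longrightarrow> v \<bullet> (z' - z) \<le> e * norm (z' - z)"
  using assms by (auto simp: regular_normal_cone_def split: if_splits)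

lemma norm_le_of_linearization:
  fixes k :: "'a::real_normed_vector"
  assumes "norm (A h) \<le> M * norm h" and "norm (k - A h) \<le> \<eta> * norm h" and "\<eta> \<le> 1"
  shows "norm k \<le> (M + 1) * norm h"
  using norm_triangle_sub[of k "A h"] assms mult_right_mono[OF \<open>\<eta> \<le> 1\<close> norm_ge_zero[of h]]
  by (simp add: algebra_simps)

lemma adjoint_inner_le_of_linearization:
  fixes A :: "'a::euclidean_space \<Rightarrow> 'b::euclidean_space"
  assumes "linear A" and A_bound: "norm (A h) \<le> M * norm h"
    and remainder: "norm (k - A h) \<le> \<eta> * norm h" "\<eta> \<le> 1"
    and normal: "v \<bullet> k \<le> e * norm k" "0 \<le> e"
  shows "adjoint A v \<bullet> h \<le> (e * (M + 1) + norm v * \<eta>) * norm h"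
proof -
  have "v \<bullet> (k - A h) \<ge> - (norm v * (\<eta> * norm h))"
    using Cauchy_Schwarz_ineq2[of v "k - A h"] mult_left_mono[OF remainder(1) norm_ge_zero[of v]]
    by linarith
  moreover have "e * norm k \<le> e * ((M + 1) * norm h)"
    using norm_le_of_linearization[where A = A and h = h, OF A_bound remainder] \<open>0 \<le> e\<close>
    by (rule mult_left_mono)
  moreover have "adjoint A v \<bullet> h = v \<bullet> k - v \<bullet> (k - A h)"
    by (simp add: adjoint_clauses[OF \<open>linear A\<close>] inner_diff_right inner_commute)
  ultimately show ?thesis using normal(1) by (simp add: algebra_simps)
qed

lemma regular_normal_cone_pullback:
  fixes \<Phi> :: "'a::euclidean_space \<Rightarrow> 'b::euclidean_space"
  assumes deriv: "(\<Phi> has_derivative A) (at z0 within S)"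
    and "z0 \<in> S" and maps: "\<Phi> ` S \<subseteq> G"
    and v: "v \<in> regular_normal_cone G (\<Phi> z0)"
  shows "adjoint A v \<in> regular_normal_cone S z0"
proof -
  have "linear A" using deriv by (simp add: has_derivative_def bounded_linear.linear)
  obtain M where "M > 0" and M: "\<And>h. norm (A h) \<le> M * norm h"
    using linear_bounded_pos[OF \<open>linear A\<close>] by blast
  have "\<exists>d>0. \<forall>z\<in>S. norm (z - z0) < d \<longrightarrow> adjoint A v \<bullet> (z - z0) \<le> e * norm (z - z0)"
    if "e > 0" for e
  proof -
    define \<epsilon> where "\<epsilon> = e / (M + 1 + norm v)"
    have "M + 1 + norm v > 0" using \<open>M > 0\<close> by (simp add: add_pos_nonneg)
    then have "\<epsilon> > 0" using \<open>e > 0\<close> by (simp add: \<epsilon>_def)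
    have "norm v * min 1 \<epsilon> \<le> norm v * \<epsilon>" by (intro mult_left_mono) auto
    then have "\<epsilon> * (M + 1) + norm v * min 1 \<epsilon> \<le> \<epsilon> * (M + 1 + norm v)"
      by (simp add: algebra_simps)
    also have "\<dots> = e" using \<open>M + 1 + norm v > 0\<close> by (simp add: \<epsilon>_def)
    finally have "\<epsilon> * (M + 1) + norm v * min 1 \<epsilon> \<le> e" .
    obtain d1 where "d1 > 0" and d1: "\<And>y. y \<in> G \<Longrightarrow> norm (y - \<Phi> z0) < d1 \<Longrightarrow>
        v \<bullet> (y - \<Phi> z0) \<le> \<epsilon> * norm (y - \<Phi> z0)"
      using regular_normal_coneE[OF v \<open>\<epsilon> > 0\<close>] by blast
    obtain d2 where "d2 > 0" and d2: "\<And>z. z \<in> S \<Longrightarrow> norm (z - z0) < d2 \<Longrightarrow>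
        norm (\<Phi> z - \<Phi> z0 - A (z - z0)) \<le> min 1 \<epsilon> * norm (z - z0)"
      using deriv \<open>\<epsilon> > 0\<close> unfolding has_derivative_within_alt
      by (metis min_less_iff_conj zero_less_one)
    show ?thesis
    proof (intro exI[of _ "min d2 (d1 / (M + 1))"] conjI ballI impI)
      show "min d2 (d1 / (M + 1)) > 0" using \<open>d1 > 0\<close> \<open>d2 > 0\<close> \<open>M > 0\<close> by simp
      fix z assume "z \<in> S" and near: "norm (z - z0) < min d2 (d1 / (M + 1))"
      have remainder: "norm (\<Phi> z - \<Phi> z0 - A (z - z0)) \<le> min 1 \<epsilon> * norm (z - z0)"
        using d2 \<open>z \<in> S\<close> near by simp
      have "norm (\<Phi> z - \<Phi> z0) \<le> (M + 1) * norm (z - z0)"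
        using norm_le_of_linearization[where A = A and h = "z - z0", OF M remainder] by simp
      also have "\<dots> < d1" using near \<open>M > 0\<close> by (simp add: field_simps)
      finally have "v \<bullet> (\<Phi> z - \<Phi> z0) \<le> \<epsilon> * norm (\<Phi> z - \<Phi> z0)"
        using d1 maps \<open>z \<in> S\<close> by blast
      then have "adjoint A v \<bullet> (z - z0) \<le> (\<epsilon> * (M + 1) + norm v * min 1 \<epsilon>) * norm (z - z0)"
        using adjoint_inner_le_of_linearization[OF \<open>linear A\<close> M remainder] \<open>\<epsilon> > 0\<close> by simp
      also have "\<dots> \<le> e * norm (z - z0)"
        using \<open>\<epsilon> * (M + 1) + norm v * min 1 \<epsilon> \<le> e\<close> by (rule mult_right_mono) simp
      finally show "adjoint A v \<bullet> (z - z0) \<le> e * norm (z - z0)" .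
    qed
  qed
  then show ?thesis using \<open>z0 \<in> S\<close> by (simp add: regular_normal_cone_def)
qed

lemma mem_gph_shift_iff:
  "(x, y) \<in> gph (\<lambda>z. (\<lambda>v. g z + v) ` F z) \<longleftrightarrow> (x, y - g x) \<in> gph F"
  for g :: "'a \<Rightarrow> 'b::ab_group_add"
  unfolding gph_def by (auto simp: image_iff intro!: bexI[where x="y - g x"])

lemma regular_normal_cone_gph_shift:
  fixes g :: "'a::euclidean_space \<Rightarrow> 'b::euclidean_space"
  assumes deriv: "(g has_derivative D) (at x)"
    and normal: "(a, b) \<in> regular_normal_cone (gph (\<lambda>z. (\<lambda>w. g z + w) ` F z)) (x, g x + v)"
  shows "(a + adjoint D b, b) \<in> regular_normal_cone (gph F) (x, v)"
proof -
  define \<Phi> where "\<Phi> p = (fst p, g (fst p) + snd p)" for p :: "'a \<times> 'b"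
  define A where "A p = (fst p, D (fst p) + snd p)" for p :: "'a \<times> 'b"
  have "linear D" using deriv by (simp add: has_derivative_def bounded_linear.linear)
  have "((\<lambda>p. g (fst p)) has_derivative (\<lambda>p. D (fst p))) (at (x, v) within gph F)"
    using has_derivative_compose[of fst fst "(x, v)" "gph F" g D] deriv
    by (simp add: has_derivative_fst[OF has_derivative_ident])
  then have deriv_\<Phi>: "(\<Phi> has_derivative A) (at (x, v) within gph F)"
    unfolding \<Phi>_def A_def by (auto intro!: derivative_eq_intros)
  have "(x, v) \<in> gph F"
    using regular_normal_cone_imp_mem[OF normal] mem_gph_shift_iff[of x "g x + v" g F] by simp
  moreover have "\<Phi> ` gph F \<subseteq> gph (\<lambda>z. (\<lambda>w. g z + w) ` F z)"
    by (auto simp: \<Phi>_def mem_gph_shift_iff)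
  moreover have "(a, b) \<in> regular_normal_cone (gph (\<lambda>z. (\<lambda>w. g z + w) ` F z)) (\<Phi> (x, v))"
    using normal by (simp add: \<Phi>_def)
  ultimately have "adjoint A (a, b) \<in> regular_normal_cone (gph F) (x, v)"
    by (rule regular_normal_cone_pullback[OF deriv_\<Phi>])
  moreover have "adjoint A = (\<lambda>(a, b). (a + adjoint D b, b))"
    by (rule adjoint_unique)
      (auto simp: A_def inner_Pair inner_add_left inner_add_right adjoint_clauses[OF \<open>linear D\<close>])
  ultimately show ?thesis by simp
qed

lemma limiting_normal_coneE:
  assumes "v \<in> limiting_normal_cone S z"
  obtains zs vs where "z \<in> S" "\<And>k. zs k \<in> S" "\<And>k. vs k \<in> regular_normal_cone S (zs k)"
    "zs \<longlonglongrightarrow> z" "vs \<longlonglongrightarrow> v"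
  using assms by (auto simp: limiting_normal_cone_def split: if_splits)

lemma limiting_normal_coneI:
  assumes "z \<in> S" "\<And>k. vs k \<in> regular_normal_cone S (zs k)" "zs \<longlonglongrightarrow> z" "vs \<longlonglongrightarrow> v"
  shows "v \<in> limiting_normal_cone S z"
proof -
  have "\<forall>k. zs k \<in> S \<and> vs k \<in> regular_normal_cone S (zs k)"
    using assms(2) regular_normal_cone_imp_mem by blast
  then show ?thesis using assms(1,3,4) unfolding limiting_normal_cone_def by auto
qed

lemma limiting_normal_cone_gph_shift:
  fixes g :: "'a::euclidean_space \<Rightarrow> 'b::euclidean_space"
  assumes deriv: "\<And>z. (g has_derivative D z) (at z)"
    and cont: "\<And>h. isCont (\<lambda>z. D z h) x"
    and normal: "(a, b) \<in> limiting_normal_cone (gph (\<lambda>z. (\<lambda>w. g z + w) ` F z)) (x, y)"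
  shows "(a + adjoint (D x) b, b) \<in> limiting_normal_cone (gph F) (x, y - g x)"
proof -
  let ?G = "gph (\<lambda>z. (\<lambda>w. g z + w) ` F z)"
  obtain zs vs where "(x, y) \<in> ?G" and "\<And>k. vs k \<in> regular_normal_cone ?G (zs k)"
    and "zs \<longlonglongrightarrow> (x, y)" and "vs \<longlonglongrightarrow> (a, b)"
    using limiting_normal_coneE[OF normal] by metis
  define xk where "xk k = fst (zs k)" for k
  have xk_lim: "xk \<longlonglongrightarrow> x"
    using tendsto_fst[OF \<open>zs \<longlonglongrightarrow> (x, y)\<close>] by (simp add: xk_def[abs_def])
  have "linear (D z)" for z using deriv[of z] by (simp add: has_derivative_def bounded_linear.linear)
  have mem: "(x, y - g x) \<in> gph F" using \<open>(x, y) \<in> ?G\<close> mem_gph_shift_iff[of x y g F] by simp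
  have regular: "(fst (vs k) + adjoint (D (xk k)) (snd (vs k)), snd (vs k))
      \<in> regular_normal_cone (gph F) (xk k, snd (zs k) - g (xk k))" for k
  proof (rule regular_normal_cone_gph_shift[OF deriv])
    have "zs k = (xk k, g (xk k) + (snd (zs k) - g (xk k)))" by (simp add: xk_def)
    then show "(fst (vs k), snd (vs k)) \<in> regular_normal_cone ?G (xk k, g (xk k) + (snd (zs k) - g (xk k)))"
      using \<open>vs k \<in> regular_normal_cone ?G (zs k)\<close> by simp
  qed
  have base_lim: "(\<lambda>k. (xk k, snd (zs k) - g (xk k))) \<longlonglongrightarrow> (x, y - g x)"
    using xk_lim tendsto_snd[OF \<open>zs \<longlonglongrightarrow> (x, y)\<close>]
      isCont_tendsto_compose[OF has_derivative_continuous[OF deriv] xk_lim]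
    by (intro tendsto_Pair tendsto_diff) simp_all
  have normal_lim: "(\<lambda>k. (fst (vs k) + adjoint (D (xk k)) (snd (vs k)), snd (vs k)))
      \<longlonglongrightarrow> (a + adjoint (D x) b, b)"
    unfolding adjoint_eq_sum_Basis[OF \<open>\<And>z. linear (D z)\<close>]
    using tendsto_fst[OF \<open>vs \<longlonglongrightarrow> (a, b)\<close>] tendsto_snd[OF \<open>vs \<longlonglongrightarrow> (a, b)\<close>]
      isCont_tendsto_compose[OF cont xk_lim]
    by (intro tendsto_Pair tendsto_add tendsto_sum tendsto_scaleR tendsto_inner tendsto_const) simp_all
  show ?thesis by (rule limiting_normal_coneI[OF mem regular base_lim normal_lim])
qed

lemma coderiv_gph_shift:
  fixes g :: "'a::euclidean_space \<Rightarrow> 'b::euclidean_space"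
  assumes "\<And>z. (g has_derivative D z) (at z)" and "\<And>h. isCont (\<lambda>z. D z h) x"
    and "(ys, xs) \<in> coderiv_gph (\<lambda>z. (\<lambda>w. g z + w) ` F z) x y"
  shows "(ys, xs - adjoint (D x) ys) \<in> coderiv_gph F x (y - g x)"
proof -
  have "linear (D x)" using assms(1)[of x] by (simp add: has_derivative_def bounded_linear.linear)
  then show ?thesis
    using limiting_normal_cone_gph_shift[OF assms(1,2), of xs "- ys"] assms(3)
    by (simp add: coderiv_gph_def linear_neg adjoint_linear)
qed

lemma coderiv_gph_imp_mem_gph: "(ys, xs) \<in> coderiv_gph G x y \<Longrightarrow> (x, y) \<in> gph G"
  by (auto simp: coderiv_gph_def limiting_normal_cone_def split: if_splits)

lemma pnorm_fst_le: "norm a \<le> pnorm (a, b)"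
  and pnorm_snd_le: "norm b \<le> pnorm (a, b)"
  and pnorm_nonneg: "0 \<le> pnorm p"
  by (simp_all add: pnorm_def le_max_iff_disj)

lemma perturbed_coderivative_estimate:
  fixes D :: "'a::euclidean_space \<Rightarrow> 'b::euclidean_space"
  assumes "linear D" and D_bound: "\<And>h. norm (D h) \<le> L * norm h" and "0 \<le> L" "0 \<le> e"
    and r: "norm r \<le> \<eta> * norm h" and "0 \<le> \<eta>" "\<eta> \<le> 1"
    and estimate: "\<bar>(xs - adjoint D ys) \<bullet> h - ys \<bullet> (k - D h - r)\<bar>
      \<le> e * pnorm (xs - adjoint D ys, ys) * pnorm (h, k - D h - r)"
  shows "\<bar>xs \<bullet> h - ys \<bullet> k\<bar> \<le> (e * (1 + L) * (L + 2) + \<eta>) * pnorm (xs, ys) * pnorm (h, k)"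
proof -
  define P where "P = pnorm (xs, ys)"
  define Q where "Q = pnorm (h, k)"
  have P: "norm xs \<le> P" "norm ys \<le> P" and Q: "norm h \<le> Q" "norm k \<le> Q"
    by (simp_all add: P_def Q_def pnorm_fst_le pnorm_snd_le)
  have "0 \<le> P" "0 \<le> Q" by (simp_all add: P_def Q_def pnorm_nonneg)
  have "norm (xs - adjoint D ys) \<le> norm xs + L * norm ys"
    using norm_triangle_ineq4[of xs "adjoint D ys"] norm_adjoint_le[OF \<open>linear D\<close> D_bound, of ys]
    by linarith
  also have "\<dots> \<le> (1 + L) * P"
    using P mult_left_mono[OF P(2) \<open>0 \<le> L\<close>] by (simp add: algebra_simps)
  finally have "pnorm (xs - adjoint D ys, ys) \<le> (1 + L) * P"
    using P(2) mult_nonneg_nonneg[OF \<open>0 \<le> L\<close> \<open>0 \<le> P\<close>] by (simp add: pnorm_def algebra_simps)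
  moreover have r': "norm r \<le> \<eta> * Q"
    using r mult_left_mono[OF Q(1) \<open>0 \<le> \<eta>\<close>] by linarith
  then have "norm (k - D h - r) \<le> (L + 2) * Q"
    using norm_triangle_ineq4[of "k - D h" r] norm_triangle_ineq4[of k "D h"] D_bound[of h]
      mult_left_mono[OF Q(1) \<open>0 \<le> L\<close>] mult_right_mono[OF \<open>\<eta> \<le> 1\<close> \<open>0 \<le> Q\<close>] Q
    by (simp add: algebra_simps)
  then have "pnorm (h, k - D h - r) \<le> (L + 2) * Q"
    using Q(1) mult_nonneg_nonneg[OF \<open>0 \<le> L\<close> \<open>0 \<le> Q\<close>] \<open>0 \<le> Q\<close>
    by (simp add: pnorm_def algebra_simps)
  ultimately have "e * pnorm (xs - adjoint D ys, ys) * pnorm (h, k - D h - r)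
      \<le> e * ((1 + L) * P) * ((L + 2) * Q)"
    using \<open>0 \<le> e\<close> \<open>0 \<le> L\<close> \<open>0 \<le> P\<close>
    by (intro mult_mono mult_left_mono) (simp_all add: pnorm_nonneg)
  moreover have "\<bar>ys \<bullet> r\<bar> \<le> P * (\<eta> * Q)"
    using Cauchy_Schwarz_ineq2[of ys r] mult_mono[OF P(2) r' \<open>0 \<le> P\<close> norm_ge_zero] by linarith
  moreover have "xs \<bullet> h - ys \<bullet> k = ((xs - adjoint D ys) \<bullet> h - ys \<bullet> (k - D h - r)) - ys \<bullet> r"
    by (simp add: inner_diff_left inner_diff_right adjoint_clauses[OF \<open>linear D\<close>])
  moreover have "(e * (1 + L) * (L + 2) + \<eta>) * P * Q = e * ((1 + L) * P) * ((L + 2) * Q) + P * (\<eta> * Q)"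
    by (simp add: algebra_simps)
  ultimately show ?thesis using estimate unfolding P_def Q_def by linarith
qed

lemma coderivative_estimate_smooth_shift:
  fixes g :: "'a::euclidean_space \<Rightarrow> 'b::euclidean_space"
  assumes deriv: "\<And>z. (g has_derivative D z) (at z)" and cont: "\<And>h. isCont (\<lambda>z. D z h) x"
    and D_bound: "\<And>h. norm (D x h) \<le> L * norm h" "0 \<le> L"
    and linearization: "norm (g x - g u - D x (x - u)) \<le> \<eta> * norm (x - u)" "0 \<le> \<eta>" "\<eta> \<le> 1"
    and semismooth: "\<And>x' v' ys' xs'. norm (x' - u) \<le> r \<Longrightarrow> norm (v' - - g u) \<le> r \<Longrightarrow>
      (x', v') \<in> gph F \<Longrightarrow> (ys', xs') \<in> coderiv_gph F x' v' \<Longrightarrow>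
      \<bar>xs' \<bullet> (x' - u) - ys' \<bullet> (v' - - g u)\<bar> \<le> e * pnorm (xs', ys') * pnorm (x' - u, v' - - g u)"
      "0 \<le> e"
    and near: "norm (x - u) \<le> d" "norm y \<le> d" "(L + 2) * d \<le> r"
    and normal: "(ys, xs) \<in> coderiv_gph (\<lambda>z. (\<lambda>w. g z + w) ` F z) x y"
  shows "\<bar>xs \<bullet> (x - u) - ys \<bullet> y\<bar> \<le> (e * (1 + L) * (L + 2) + \<eta>) * pnorm (xs, ys) * pnorm (x - u, y)"
proof -
  have "linear (D x)" using deriv[of x] by (simp add: has_derivative_def bounded_linear.linear)
  define rem where "rem = g x - g u - D x (x - u)"
  have normal_F: "(ys, xs - adjoint (D x) ys) \<in> coderiv_gph F x (y - g x)"
    by (rule coderiv_gph_shift[OF deriv cont normal])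
  have shift: "y - g x - - g u = y - D x (x - u) - rem" by (simp add: rem_def)
  have "0 \<le> d" using near(2) norm_ge_zero order_trans by blast
  have "norm (y - D x (x - u) - rem) \<le> norm y + L * norm (x - u) + \<eta> * norm (x - u)"
    using norm_triangle_ineq4[of "y - D x (x - u)" rem] norm_triangle_ineq4[of y "D x (x - u)"]
      D_bound(1)[of "x - u"] linearization(1) by (simp add: rem_def)
  also have "\<dots> \<le> (L + 2) * d"
    using near mult_left_mono[OF near(1) D_bound(2)] mult_mono[OF linearization(3) near(1)] \<open>0 \<le> d\<close>
    by (simp add: algebra_simps)
  finally have y_near: "norm (y - g x - - g u) \<le> r" unfolding shift using near(3) by linarith
  have x_near: "norm (x - u) \<le> r"
    using near(1,3) mult_nonneg_nonneg[OF \<open>0 \<le> L\<close> \<open>0 \<le> d\<close>] \<open>0 \<le> d\<close> by (simp add: distrib_right)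
  from x_near y_near have "\<bar>(xs - adjoint (D x) ys) \<bullet> (x - u) - ys \<bullet> (y - g x - - g u)\<bar>
      \<le> e * pnorm (xs - adjoint (D x) ys, ys) * pnorm (x - u, y - g x - - g u)"
    by (rule semismooth(1)[OF _ _ coderiv_gph_imp_mem_gph[OF normal_F] normal_F])
  then have "\<bar>(xs - adjoint (D x) ys) \<bullet> (x - u) - ys \<bullet> (y - D x (x - u) - rem)\<bar>
      \<le> e * pnorm (xs - adjoint (D x) ys, ys) * pnorm (x - u, y - D x (x - u) - rem)"
    by (simp only: shift)
  then show ?thesis
    using perturbed_coderivative_estimate[OF \<open>linear (D x)\<close> D_bound semismooth(2)]
      linearization by (simp add: rem_def)
qed

lemma has_derivative_partial_snd:
  assumes "\<And>p. p \<in> I \<times> UNIV \<Longrightarrow>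
      ((\<lambda>q. f (fst q) (snd q)) has_derivative blinfun_apply (f' p)) (at p within I \<times> UNIV)"
    and "t \<in> I"
  shows "(f t has_derivative (\<lambda>h. f' (t, x) (0, h))) (at x)"
proof -
  have "((\<lambda>x. (\<lambda>q. f (fst q) (snd q)) (t, x)) has_derivative (\<lambda>h. f' (t, x) (0, h))) (at x within UNIV)"
    by (rule has_derivative_in_compose2[OF assms(1)])
      (use assms(2) in \<open>auto intro!: derivative_eq_intros\<close>)
  then show ?thesis by simp
qed

lemma isCont_partial_snd:
  assumes "continuous_on (I \<times> UNIV) f'" and "t \<in> I"
  shows "isCont (\<lambda>x. blinfun_apply (f' (t, x)) (0, h)) x"
proof -
  have "continuous_on UNIV (\<lambda>x. f' (t, x))"
    by (rule continuous_on_compose2[OF assms(1)]) (use assms(2) in \<open>auto intro!: continuous_intros\<close>)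
  then have "continuous_on UNIV (\<lambda>x. blinfun_apply (f' (t, x)) (0, h))"
    by (intro continuous_intros) auto
  then show ?thesis by (simp add: continuous_on_eq_continuous_at)
qed

lemma compact_tube:
  fixes \<gamma> :: "'t::topological_space \<Rightarrow> 'a::euclidean_space"
  assumes "compact I" and "continuous_on I \<gamma>"
  shows "compact {(t, x). t \<in> I \<and> dist x (\<gamma> t) \<le> \<delta>}"
proof -
  have tube_eq: "{(t, x). t \<in> I \<and> dist x (\<gamma> t) \<le> \<delta>} = (\<lambda>(t, h). (t, \<gamma> t + h)) ` (I \<times> cball 0 \<delta>)"
  proof (intro subset_antisym subsetI)
    fix p assume "p \<in> {(t, x). t \<in> I \<and> dist x (\<gamma> t) \<le> \<delta>}"
    then show "p \<in> (\<lambda>(t, h). (t, \<gamma> t + h)) ` (I \<times> cball 0 \<delta>)"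
      by (auto simp: dist_norm norm_minus_commute intro!: image_eqI[where x="(fst p, snd p - \<gamma> (fst p))"])
  qed (auto simp: dist_norm)
  have "continuous_on (I \<times> cball 0 \<delta>) (\<lambda>p. \<gamma> (fst p))"
    by (rule continuous_on_compose2[OF assms(2)]) (auto intro!: continuous_intros)
  then have "continuous_on (I \<times> cball 0 \<delta>) (\<lambda>(t, h). (t, \<gamma> t + h))"
    by (auto simp: case_prod_unfold intro!: continuous_intros)
  then show ?thesis
    unfolding tube_eq by (rule compact_continuous_image[OF _ compact_Times[OF assms(1) compact_cball]])
qed

lemma closed_segment_vertical_subset_tube:
  fixes \<gamma> :: "'t::real_normed_vector \<Rightarrow> 'a::real_normed_vector"
  assumes "t \<in> I" and "dist x (\<gamma> t) \<le> \<delta>"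
  shows "closed_segment (t, \<gamma> t) (t, x) \<subseteq> {(t, x). t \<in> I \<and> dist x (\<gamma> t) \<le> \<delta>}"
proof
  fix z assume "z \<in> closed_segment (t, \<gamma> t) (t, x)"
  then have "fst z = t" "snd z \<in> closed_segment (\<gamma> t) x"
    using closed_segment_PairD[of "fst z" "snd z" t "\<gamma> t" t x] by simp_all
  then show "z \<in> {(t, x). t \<in> I \<and> dist x (\<gamma> t) \<le> \<delta>}"
    using segment_bound1[of "snd z" "\<gamma> t" x] assms by (auto simp: dist_norm prod_eq_iff)
qed

lemma uniform_linearization_compact:
  fixes \<phi> :: "'a::real_normed_vector \<Rightarrow> 'b::real_normed_vector"
  assumes "compact K"
    and deriv: "\<And>p. p \<in> K \<Longrightarrow> (\<phi> has_derivative blinfun_apply (\<phi>' p)) (at p within K)"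
    and "continuous_on K \<phi>'" and "\<eta> > 0"
  obtains \<rho> where "\<rho> > 0"
    and "\<And>p q. closed_segment p q \<subseteq> K \<Longrightarrow> dist p q < \<rho> \<Longrightarrow>
      norm (\<phi> q - \<phi> p - \<phi>' q (q - p)) \<le> \<eta> * norm (q - p)"
proof -
  obtain \<rho> where "\<rho> > 0" and \<rho>: "\<And>p q. p \<in> K \<Longrightarrow> q \<in> K \<Longrightarrow> dist p q < \<rho> \<Longrightarrow> dist (\<phi>' p) (\<phi>' q) < \<eta>"
    using compact_uniformly_continuous[OF assms(3,1)] \<open>\<eta> > 0\<close>
    unfolding uniformly_continuous_on_def by metis
  have "norm (\<phi> q - \<phi> p - \<phi>' q (q - p)) \<le> \<eta> * norm (q - p)"
    if seg: "closed_segment p q \<subseteq> K" and "dist p q < \<rho>" for p q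
  proof -
    have "norm (\<phi> q - \<phi> p - \<phi>' q (q - p)) \<le> norm (q - p) * \<eta>"
    proof (rule differentiable_bound_linearization[where S = "closed_segment p q"])
      show "p + s *\<^sub>R (q - p) \<in> closed_segment p q" if "s \<in> {0..1}" for s
        using that by (auto simp: in_segment algebra_simps intro!: exI[where x=s])
      show "(\<phi> has_derivative blinfun_apply (\<phi>' z)) (at z within closed_segment p q)"
        if "z \<in> closed_segment p q" for z
        using has_derivative_subset[OF deriv seg] that seg by blast
      show "onorm (blinfun_apply (\<phi>' z) - blinfun_apply (\<phi>' q)) \<le> \<eta>"
        if "z \<in> closed_segment p q" for z
      proof -
        have "dist z q < \<rho>"
          using segment_bound(2)[OF that] \<open>dist p q < \<rho>\<close> by (simp add: dist_norm norm_minus_commute)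
        then have "norm (\<phi>' z - \<phi>' q) < \<eta>" using \<rho> that seg by (auto simp: dist_norm)
        then show ?thesis by (simp add: norm_blinfun.rep_eq minus_blinfun.rep_eq fun_diff_def)
      qed
    qed auto
    then show ?thesis by (simp add: mult.commute)
  qed
  with \<open>\<rho> > 0\<close> show thesis using that by blast
qed

lemma uniform_partial_linearization_near_path:
  fixes \<gamma> :: "'t::real_normed_vector \<Rightarrow> 'a::euclidean_space"
    and f' :: "'t \<times> 'a \<Rightarrow> ('t \<times> 'a) \<Rightarrow>\<^sub>L 'b::real_normed_vector"
  assumes "compact I" and "continuous_on I \<gamma>"
    and deriv: "\<And>p. p \<in> I \<times> UNIV \<Longrightarrow>
      ((\<lambda>q. f (fst q) (snd q)) has_derivative blinfun_apply (f' p)) (at p within I \<times> UNIV)"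
    and cont: "continuous_on (I \<times> UNIV) f'"
  obtains L where "0 \<le> L" and "\<And>t x. t \<in> I \<Longrightarrow> dist x (\<gamma> t) \<le> 1 \<Longrightarrow> norm (f' (t, x)) \<le> L"
    and "\<And>\<eta>. \<eta> > 0 \<Longrightarrow> \<exists>\<rho>>0. \<forall>t\<in>I. \<forall>x. dist x (\<gamma> t) < \<rho> \<longrightarrow>
      norm (f t x - f t (\<gamma> t) - f' (t, x) (0, x - \<gamma> t)) \<le> \<eta> * norm (x - \<gamma> t)"
proof -
  define K where "K = {(t, x). t \<in> I \<and> dist x (\<gamma> t) \<le> 1}"
  have "compact K" unfolding K_def by (rule compact_tube[OF assms(1,2)])
  have "K \<subseteq> I \<times> UNIV" by (auto simp: K_def)
  then have cont_K: "continuous_on K f'" using cont continuous_on_subset by blast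
  obtain L where "L > 0" and L: "\<And>p. p \<in> K \<Longrightarrow> norm (f' p) \<le> L"
    using compact_imp_bounded[OF compact_continuous_image[OF cont_K \<open>compact K\<close>]]
    unfolding bounded_pos by blast
  have deriv_K: "((\<lambda>q. f (fst q) (snd q)) has_derivative blinfun_apply (f' p)) (at p within K)"
    if "p \<in> K" for p
    using has_derivative_subset[OF deriv \<open>K \<subseteq> I \<times> UNIV\<close>] that \<open>K \<subseteq> I \<times> UNIV\<close> by blast
  have linearization: "\<exists>\<rho>>0. \<forall>t\<in>I. \<forall>x. dist x (\<gamma> t) < \<rho> \<longrightarrow>
      norm (f t x - f t (\<gamma> t) - f' (t, x) (0, x - \<gamma> t)) \<le> \<eta> * norm (x - \<gamma> t)"
    if "\<eta> > 0" for \<eta>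
  proof -
    obtain \<rho> where "\<rho> > 0" and \<rho>: "\<And>p q. closed_segment p q \<subseteq> K \<Longrightarrow> dist p q < \<rho> \<Longrightarrow>
        norm (f (fst q) (snd q) - f (fst p) (snd p) - f' q (q - p)) \<le> \<eta> * norm (q - p)"
      using uniform_linearization_compact[OF \<open>compact K\<close> deriv_K cont_K \<open>\<eta> > 0\<close>] by blast
    have "norm (f t x - f t (\<gamma> t) - f' (t, x) (0, x - \<gamma> t)) \<le> \<eta> * norm (x - \<gamma> t)"
      if "t \<in> I" and near: "dist x (\<gamma> t) < min \<rho> 1" for t x
    proof -
      have "closed_segment (t, \<gamma> t) (t, x) \<subseteq> K"
        unfolding K_def using \<open>t \<in> I\<close> near by (intro closed_segment_vertical_subset_tube) auto
      moreover have "dist (t, \<gamma> t) (t, x) < \<rho>" using near by (simp add: dist_Pair_Pair dist_commute)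
      ultimately show ?thesis using \<rho> by fastforce
    qed
    then show ?thesis using \<open>\<rho> > 0\<close> by (intro exI[of _ "min \<rho> 1"]) auto
  qed
  have bound: "norm (f' (t, x)) \<le> L" if "t \<in> I" "dist x (\<gamma> t) \<le> 1" for t x
    using L that by (simp add: K_def)
  show thesis by (rule that[OF less_imp_le[OF \<open>L > 0\<close>] bound linearization])
qed

lemma uniformly_semismooth_starE:
  assumes "uniformly_semismooth_star F W" and "e > 0"
  obtains d where "d > 0"
    and "\<And>u z x y ys xs. (u, z) \<in> W \<Longrightarrow> norm (x - u) \<le> d \<Longrightarrow> norm (y - z) \<le> d \<Longrightarrow>
      (x, y) \<in> gph F \<Longrightarrow> (ys, xs) \<in> coderiv_gph F x y \<Longrightarrow>
      \<bar>xs \<bullet> (x - u) - ys \<bullet> (y - z)\<bar> \<le> e * pnorm (xs, ys) * pnorm (x - u, y - z)"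
proof -
  obtain d where "d > 0" and d: "\<forall>(u, z)\<in>W. \<forall>(x, y)\<in>(cball u d \<times> cball z d) \<inter> gph F.
      \<forall>(ys, xs)\<in>coderiv_gph F x y.
        \<bar>xs \<bullet> (x - u) - ys \<bullet> (y - z)\<bar> \<le> e * pnorm (xs, ys) * pnorm ((x, y) - (u, z))"
    using assms unfolding uniformly_semismooth_star_def by blast
  show thesis
  proof (rule that[OF \<open>d > 0\<close>])
    fix u z x y ys xs
    assume "(u, z) \<in> W" "norm (x - u) \<le> d" "norm (y - z) \<le> d" "(x, y) \<in> gph F"
      "(ys, xs) \<in> coderiv_gph F x y"
    then show "\<bar>xs \<bullet> (x - u) - ys \<bullet> (y - z)\<bar> \<le> e * pnorm (xs, ys) * pnorm (x - u, y - z)"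
      using d by (fastforce simp: dist_norm norm_minus_commute)
  qed
qed

lemma uniform_coderivative_estimate_near_path:
  fixes \<gamma> :: "'t::real_normed_vector \<Rightarrow> 'a::euclidean_space"
    and F :: "'a \<Rightarrow> 'a set" and f :: "'t \<Rightarrow> 'a \<Rightarrow> 'a"
    and f' :: "'t \<times> 'a \<Rightarrow> ('t \<times> 'a) \<Rightarrow>\<^sub>L 'a"
  assumes "compact I" and "continuous_on I \<gamma>"
    and deriv: "\<And>p. p \<in> I \<times> UNIV \<Longrightarrow>
      ((\<lambda>q. f (fst q) (snd q)) has_derivative blinfun_apply (f' p)) (at p within I \<times> UNIV)"
    and cont: "continuous_on (I \<times> UNIV) f'"
    and semismooth: "uniformly_semismooth_star F ((\<lambda>t. (\<gamma> t, - f t (\<gamma> t))) ` I)"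
  obtains L where "0 \<le> L"
    and "\<And>e \<eta>. 0 < e \<Longrightarrow> 0 < \<eta> \<Longrightarrow> \<eta> \<le> 1 \<Longrightarrow> \<exists>d>0. \<forall>t\<in>I. \<forall>x y ys xs.
      norm (x - \<gamma> t) \<le> d \<longrightarrow> norm y \<le> d \<longrightarrow> (ys, xs) \<in> coderiv_gph (\<lambda>z. (\<lambda>v. f t z + v) ` F z) x y \<longrightarrow>
      \<bar>xs \<bullet> (x - \<gamma> t) - ys \<bullet> y\<bar> \<le> (e * (1 + L) * (L + 2) + \<eta>) * pnorm (xs, ys) * pnorm (x - \<gamma> t, y)"
proof -
  obtain L where "0 \<le> L" and f'_bound: "\<And>t x. t \<in> I \<Longrightarrow> dist x (\<gamma> t) \<le> 1 \<Longrightarrow> norm (f' (t, x)) \<le> L"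
    and linearization: "\<And>\<eta>. \<eta> > 0 \<Longrightarrow> \<exists>\<rho>>0. \<forall>t\<in>I. \<forall>x. dist x (\<gamma> t) < \<rho> \<longrightarrow>
      norm (f t x - f t (\<gamma> t) - f' (t, x) (0, x - \<gamma> t)) \<le> \<eta> * norm (x - \<gamma> t)"
    using uniform_partial_linearization_near_path[OF assms(1-4)] by blast
  have "\<exists>d>0. \<forall>t\<in>I. \<forall>x y ys xs.
      norm (x - \<gamma> t) \<le> d \<longrightarrow> norm y \<le> d \<longrightarrow> (ys, xs) \<in> coderiv_gph (\<lambda>z. (\<lambda>v. f t z + v) ` F z) x y \<longrightarrow>
      \<bar>xs \<bullet> (x - \<gamma> t) - ys \<bullet> y\<bar> \<le> (e * (1 + L) * (L + 2) + \<eta>) * pnorm (xs, ys) * pnorm (x - \<gamma> t, y)"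
    if "0 < e" and \<eta>: "0 < \<eta>" "\<eta> \<le> 1" for e \<eta>
  proof -
    obtain \<rho> where "\<rho> > 0" and \<rho>: "\<forall>t\<in>I. \<forall>x. dist x (\<gamma> t) < \<rho> \<longrightarrow>
        norm (f t x - f t (\<gamma> t) - f' (t, x) (0, x - \<gamma> t)) \<le> \<eta> * norm (x - \<gamma> t)"
      using linearization[OF \<open>\<eta> > 0\<close>] by blast
    obtain r where "r > 0" and semismooth_r: "\<And>u z x y ys xs. (u, z) \<in> (\<lambda>t. (\<gamma> t, - f t (\<gamma> t))) ` I \<Longrightarrow>
        norm (x - u) \<le> r \<Longrightarrow> norm (y - z) \<le> r \<Longrightarrow> (x, y) \<in> gph F \<Longrightarrow> (ys, xs) \<in> coderiv_gph F x y \<Longrightarrow>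
        \<bar>xs \<bullet> (x - u) - ys \<bullet> (y - z)\<bar> \<le> e * pnorm (xs, ys) * pnorm (x - u, y - z)"
      using uniformly_semismooth_starE[OF semismooth \<open>e > 0\<close>] by blast
    define d where "d = min (min 1 (\<rho> / 2)) (r / (L + 2))"
    have "d > 0" "d \<le> 1" "d < \<rho>" using \<open>\<rho> > 0\<close> \<open>r > 0\<close> \<open>0 \<le> L\<close> by (simp_all add: d_def)
    have "(L + 2) * d \<le> (L + 2) * (r / (L + 2))"
      using \<open>0 \<le> L\<close> by (intro mult_left_mono) (simp_all add: d_def)
    then have "(L + 2) * d \<le> r" using \<open>0 \<le> L\<close> by simp
    have "\<bar>xs \<bullet> (x - \<gamma> t) - ys \<bullet> y\<bar> \<le> (e * (1 + L) * (L + 2) + \<eta>) * pnorm (xs, ys) * pnorm (x - \<gamma> t, y)"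
      if "t \<in> I" and near: "norm (x - \<gamma> t) \<le> d" "norm y \<le> d"
        and normal: "(ys, xs) \<in> coderiv_gph (\<lambda>z. (\<lambda>v. f t z + v) ` F z) x y" for t x y ys xs
    proof (rule coderivative_estimate_smooth_shift[where e = e, OF has_derivative_partial_snd[OF deriv \<open>t \<in> I\<close>]
          isCont_partial_snd[OF cont \<open>t \<in> I\<close>] _ \<open>0 \<le> L\<close> _ _ _ semismooth_r[OF imageI[OF \<open>t \<in> I\<close>]] _
          near \<open>(L + 2) * d \<le> r\<close> normal])
      have "norm (f' (t, x)) \<le> L"
        using f'_bound[OF \<open>t \<in> I\<close>] near(1) \<open>d \<le> 1\<close> by (simp add: dist_norm)
      then show "norm (f' (t, x) (0, h)) \<le> L * norm h" for h
        using norm_blinfun[of "f' (t, x)" "(0, h)"] mult_right_mono[OF _ norm_ge_zero[of h]] by force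
      show "norm (f t x - f t (\<gamma> t) - f' (t, x) (0, x - \<gamma> t)) \<le> \<eta> * norm (x - \<gamma> t)"
        using \<rho> \<open>t \<in> I\<close> near(1) \<open>d < \<rho>\<close> by (simp add: dist_norm)
    qed (use \<open>0 < e\<close> \<eta> in simp_all)
    with \<open>d > 0\<close> show ?thesis by blast
  qed
  with \<open>0 \<le> L\<close> show thesis using that by blast
qed

lemma uniformly_semismooth_star_smooth_shift:
  fixes \<gamma> :: "'t::real_normed_vector \<Rightarrow> 'a::euclidean_space"
    and F :: "'a \<Rightarrow> 'a set" and f :: "'t \<Rightarrow> 'a \<Rightarrow> 'a"
    and f' :: "'t \<times> 'a \<Rightarrow> ('t \<times> 'a) \<Rightarrow>\<^sub>L 'a"
  assumes "compact I" and "continuous_on I \<gamma>"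
    and "\<And>p. p \<in> I \<times> UNIV \<Longrightarrow>
      ((\<lambda>q. f (fst q) (snd q)) has_derivative blinfun_apply (f' p)) (at p within I \<times> UNIV)"
    and "continuous_on (I \<times> UNIV) f'"
    and "uniformly_semismooth_star F ((\<lambda>t. (\<gamma> t, - f t (\<gamma> t))) ` I)"
  shows "\<forall>e>0. \<exists>d>0. \<forall>t\<in>I.
           \<forall>(x, y)\<in>(cball (\<gamma> t) d \<times> cball 0 d) \<inter> gph (\<lambda>z. (\<lambda>v. f t z + v) ` F z).
             \<forall>(ys, xs)\<in>coderiv_gph (\<lambda>z. (\<lambda>v. f t z + v) ` F z) x y.
               \<bar>xs \<bullet> (x - \<gamma> t) - ys \<bullet> y\<bar> \<le> e * pnorm (xs, ys) * pnorm ((x, y) - (\<gamma> t, 0))"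
proof (intro allI impI)
  fix e :: real
  assume "e > 0"
  obtain L where "0 \<le> L"
    and estimate: "\<And>e' \<eta>. 0 < e' \<Longrightarrow> 0 < \<eta> \<Longrightarrow> \<eta> \<le> 1 \<Longrightarrow> \<exists>d>0. \<forall>t\<in>I. \<forall>x y ys xs.
      norm (x - \<gamma> t) \<le> d \<longrightarrow> norm y \<le> d \<longrightarrow> (ys, xs) \<in> coderiv_gph (\<lambda>z. (\<lambda>v. f t z + v) ` F z) x y \<longrightarrow>
      \<bar>xs \<bullet> (x - \<gamma> t) - ys \<bullet> y\<bar> \<le> (e' * (1 + L) * (L + 2) + \<eta>) * pnorm (xs, ys) * pnorm (x - \<gamma> t, y)"
    using uniform_coderivative_estimate_near_path[OF assms] by blast
  define e' where "e' = e / (2 * ((1 + L) * (L + 2)))"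
  have "e' * (1 + L) * (L + 2) = e / 2"
    using \<open>0 \<le> L\<close> by (simp add: e'_def divide_simps add_nonneg_pos)
  then have coefficient: "e' * (1 + L) * (L + 2) + min 1 (e / 2) \<le> e" by simp
  obtain d where "d > 0" and d: "\<forall>t\<in>I. \<forall>x y ys xs.
      norm (x - \<gamma> t) \<le> d \<longrightarrow> norm y \<le> d \<longrightarrow> (ys, xs) \<in> coderiv_gph (\<lambda>z. (\<lambda>v. f t z + v) ` F z) x y \<longrightarrow>
      \<bar>xs \<bullet> (x - \<gamma> t) - ys \<bullet> y\<bar> \<le> (e' * (1 + L) * (L + 2) + min 1 (e / 2)) * pnorm (xs, ys) * pnorm (x - \<gamma> t, y)"
    using estimate[of e' "min 1 (e / 2)"] \<open>e > 0\<close> \<open>0 \<le> L\<close> by (auto simp: e'_def add_nonneg_pos)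
  show "\<exists>d>0. \<forall>t\<in>I.
           \<forall>(x, y)\<in>(cball (\<gamma> t) d \<times> cball 0 d) \<inter> gph (\<lambda>z. (\<lambda>v. f t z + v) ` F z).
             \<forall>(ys, xs)\<in>coderiv_gph (\<lambda>z. (\<lambda>v. f t z + v) ` F z) x y.
               \<bar>xs \<bullet> (x - \<gamma> t) - ys \<bullet> y\<bar> \<le> e * pnorm (xs, ys) * pnorm ((x, y) - (\<gamma> t, 0))"
  proof (intro exI[of _ d] conjI \<open>d > 0\<close> ballI, clarify)
    fix t x y ys xs
    assume "t \<in> I" "x \<in> cball (\<gamma> t) d" "y \<in> cball 0 d"
      "(ys, xs) \<in> coderiv_gph (\<lambda>z. (\<lambda>v. f t z + v) ` F z) x y"
    then have "\<bar>xs \<bullet> (x - \<gamma> t) - ys \<bullet> y\<bar>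
        \<le> (e' * (1 + L) * (L + 2) + min 1 (e / 2)) * pnorm (xs, ys) * pnorm (x - \<gamma> t, y)"
      using d by (simp add: dist_norm norm_minus_commute)
    also have "\<dots> \<le> e * pnorm (xs, ys) * pnorm (x - \<gamma> t, y)"
      using coefficient by (intro mult_right_mono) (simp_all add: pnorm_nonneg)
    finally show "\<bar>xs \<bullet> (x - \<gamma> t) - ys \<bullet> y\<bar> \<le> e * pnorm (xs, ys) * pnorm ((x, y) - (\<gamma> t, 0))"
      by simp
  qed
qed

theorem theorem3p2:
  fixes T :: real
    and F :: "'a::euclidean_space \<Rightarrow> 'a set"
    and f :: "real \<Rightarrow> 'a \<Rightarrow> 'a"
    and f' :: "real \<times> 'a \<Rightarrow> (real \<times> 'a) \<Rightarrow>\<^sub>L 'a"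
    and xt :: "real \<Rightarrow> 'a"
  assumes "T > 0"
    and "closed (gph F)"
    and "\<And>p. p \<in> {0..T} \<times> UNIV \<Longrightarrow>
           ((\<lambda>q. f (fst q) (snd q)) has_derivative blinfun_apply (f' p)) (at p within {0..T} \<times> UNIV)"
    and "continuous_on ({0..T} \<times> UNIV) f'"
    and "continuous_on {0..T} xt"
    and "\<And>t. t \<in> {0..T} \<Longrightarrow> 0 \<in> (\<lambda>v. f t (xt t) + v) ` F (xt t)"
    and "uniformly_semismooth_star F ((\<lambda>t. (xt t, - f t (xt t))) ` {0..T})"
  shows "\<forall>e>0. \<exists>d>0. \<forall>t\<in>{0..T}.
           \<forall>(x, y)\<in>(cball (xt t) d \<times> cball 0 d) \<inter> gph (\<lambda>z. (\<lambda>v. f t z + v) ` F z).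
             \<forall>(ys, xs)\<in>coderiv_gph (\<lambda>z. (\<lambda>v. f t z + v) ` F z) x y.
               \<bar>inner xs (x - xt t) - inner ys y\<bar> \<le> e * pnorm (xs, ys) * pnorm ((x, y) - (xt t, 0))"
  using uniformly_semismooth_star_smooth_shift[OF compact_Icc assms(5,3,4,7)] by simp

end
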